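(* For any finite graph $G=(V,E)$ there exists a sequence of graphs $(G_n)_{n\in\mathbb{N}}$ with $G_0=G$ and $G_n$ a $2$-lift of $G_{n-1}$ for $n\ge 1$ (so $G_n$ is a $2^n$-lift of $G$, with covering map $\pi_n:G_n\to G$) such that for every $v\in V$ and every choice of $v_n\in\pi_n^{-1}(v)$, the rooted graphs $(G_n,v_n)$ converge to $(T(G),v)$ in $\mathcal{G}_\star$.
   Context: A $2$-lift of a loopless graph $G$ is a graph on $V\times\{0,1\}$ in which each edge $(u,v)$ of $G$ is replaced either by $((u,0),(v,0)),((u,1),(v,1))$ or by $((u,0),(v,1)),((u,1),(v,0))$; the covering map projects $(u,i)\mapsto u$. $(T(G),v)$ is the tree of finite non-backtracking walks in $G$ starting at $v$ (walks adjacent if one extends the other by one step), rooted at the empty walk. $\mathcal{G}_\star$ is the set of locally finite connected rooted graphs up to rooted isomorphism (a rooted graph $(H,o)$ being identified with the connected component of $o$), with the distance $1/(1+r)$ where $r=\sup\{h: [H,o]_h\equiv[H',o']_h\}$ and $[H,o]_h$ is the rooted subgraph induced by vertices within graph distance $h$ of $o$. *)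

theory Defs
  imports Complex_Main "HOL-Library.Extended_Nat"
begin

text \<open>Graphs: a vertex set together with a (directed-pair) edge relation.
  Undirected simple graphs are those with symmetric, irreflexive edge relation.\<close>

record 'v graph =
  verts :: "'v set"
  edges :: "('v \<times> 'v) set"

definition finite_loopless_graph :: "'v graph \<Rightarrow> bool" where
  "finite_loopless_graph G \<longleftrightarrow>
     finite (verts G) \<and> edges G \<subseteq> verts G \<times> verts G \<and>
     sym (edges G) \<and> irrefl (edges G)"

definition map_graph :: "('v \<Rightarrow> 'w) \<Rightarrow> 'v graph \<Rightarrow> 'w graph" where
  "map_graph f H = \<lparr>verts = f ` verts H, edges = map_prod f f ` edges H\<rparr>"

text \<open>2-lift of H given a symmetric sign s on edges: s = False means the edge
  is lifted "straight" ((u,i),(w,i)), s = True means "crossed" ((u,i),(w,\<not>i)).\<close>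

definition two_lift :: "'v graph \<Rightarrow> ('v \<times> 'v \<Rightarrow> bool) \<Rightarrow> ('v \<times> bool) graph" where
  "two_lift H s =
     \<lparr>verts = verts H \<times> UNIV,
      edges = {((u,i),(w,j)). (u,w) \<in> edges H \<and> j = (i \<noteq> s (u,w))}\<rparr>"

text \<open>Vertices of the n-th graph of the tower are encoded as (v, bs) with
  bs a bool list of length n; the 2-lift of a graph on such vertices is
  re-encoded by pushing the new bit onto the list.\<close>

definition is_two_lift_of :: "('a \<times> bool list) graph \<Rightarrow> ('a \<times> bool list) graph \<Rightarrow> bool" where
  "is_two_lift_of H' H \<longleftrightarrow>
     (\<exists>s. (\<forall>u w. s (u,w) = s (w,u)) \<and>
          H' = map_graph (\<lambda>((x,bs),b). (x, b # bs)) (two_lift H s))"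

definition base_embed :: "'a graph \<Rightarrow> ('a \<times> bool list) graph" where
  "base_embed G = map_graph (\<lambda>x. (x, [])) G"

text \<open>Non-backtracking walks from v, encoded by the list of vertices visited
  after v.\<close>

definition nb_walk :: "'a graph \<Rightarrow> 'a \<Rightarrow> 'a list \<Rightarrow> bool" where
  "nb_walk G v w \<longleftrightarrow>
     (let p = v # w in
       (\<forall>i < length w. (p ! i, p ! Suc i) \<in> edges G) \<and>
       (\<forall>i. i + 2 \<le> length w \<longrightarrow> p ! (i + 2) \<noteq> p ! i))"

definition nb_tree :: "'a graph \<Rightarrow> 'a \<Rightarrow> 'a list graph" where
  "nb_tree G v =
     \<lparr>verts = {w. nb_walk G v w},
      edges = {(w, w'). nb_walk G v w \<and> nb_walk G v w' \<and>
                        ((\<exists>x. w' = w @ [x]) \<or> (\<exists>x. w = w' @ [x]))}\<rparr>"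

definition gball :: "'v graph \<Rightarrow> 'v \<Rightarrow> nat \<Rightarrow> 'v set" where
  "gball H r0 h = {x \<in> verts H. \<exists>k \<le> h. (r0, x) \<in> (edges H) ^^ k}"

definition ball_iso :: "'v graph \<Rightarrow> 'v \<Rightarrow> 'w graph \<Rightarrow> 'w \<Rightarrow> nat \<Rightarrow> bool" where
  "ball_iso H r0 H' r1 h \<longleftrightarrow>
     (\<exists>f. bij_betw f (gball H r0 h) (gball H' r1 h) \<and> f r0 = r1 \<and>
          (\<forall>x \<in> gball H r0 h. \<forall>y \<in> gball H r0 h.
              (x, y) \<in> edges H \<longleftrightarrow> (f x, f y) \<in> edges H'))"

definition gstar_dist :: "'v graph \<Rightarrow> 'v \<Rightarrow> 'w graph \<Rightarrow> 'w \<Rightarrow> real" where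
  "gstar_dist H r0 H' r1 =
     (let r = Sup {enat h | h. ball_iso H r0 H' r1 h} in
      if r = \<infinity> then 0 else 1 / (1 + real (the_enat r)))"

end

(*  A covering of G whose girth exceeds 2h + 2 has its h-balls isomorphic to the h-ball of the
    tree T(G) of non-backtracking walks: lifting walks of length at most h is onto the ball, and
    below the girth two distinct lifted walks cannot end at the same vertex.  So it suffices to
    build a tower of 2-lifts whose girth tends to infinity.  Given a level B of girth > L, split
    the edges of B one at a time, splitting e by the 2-lift in which exactly the edges lying over
    e cross.  A closed non-backtracking walk of length L + 1 at the end of this stage projects to
    a cycle of B, which runs through its first edge exactly once; in the lift that split this edge
    the walk changes sheet an odd number of times, so it cannot close.  Thus every stage raises
    the girth by one.  *)

theory Submission
  imports Defs
begin

section \<open>Non-backtracking walks\<close>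

fun nbwalk :: "'v graph \<Rightarrow> 'v list \<Rightarrow> bool" where
  "nbwalk H [] = True"
| "nbwalk H [x] = True"
| "nbwalk H (x # y # r) \<longleftrightarrow> (x, y) \<in> edges H \<and> (r \<noteq> [] \<longrightarrow> hd r \<noteq> x) \<and> nbwalk H (y # r)"

lemma nbwalk_iff_nth:
  "nbwalk H q \<longleftrightarrow> (\<forall>i. Suc i < length q \<longrightarrow> (q ! i, q ! Suc i) \<in> edges H) \<and>
                    (\<forall>i. i + 2 < length q \<longrightarrow> q ! (i + 2) \<noteq> q ! i)"
proof (induction H q rule: nbwalk.induct)
  case (3 H x y r)
  have shift: "(\<forall>i. P i) \<longleftrightarrow> P 0 \<and> (\<forall>i. P (Suc i))" for P :: "nat \<Rightarrow> bool"
    by (metis not0_implies_Suc)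
  show ?case
    unfolding nbwalk.simps(3) 3 shift[where P = "\<lambda>i. Suc i < length (x # y # r) \<longrightarrow> _ i"]
      shift[where P = "\<lambda>i. i + 2 < length (x # y # r) \<longrightarrow> _ i"]
    by (cases r) auto
qed auto

lemma nb_walk_iff_nbwalk: "nb_walk G v w \<longleftrightarrow> nbwalk G (v # w)"
  unfolding nb_walk_def nbwalk_iff_nth Let_def by auto

lemma nbwalk_Cons:
  "nbwalk H (x # q) \<longleftrightarrow>
     (q = [] \<or> (x, hd q) \<in> edges H \<and> (tl q \<noteq> [] \<longrightarrow> hd (tl q) \<noteq> x)) \<and> nbwalk H q"
  by (cases q) auto

lemma nbwalk_snoc:
  "nbwalk H (xs @ [y]) \<longleftrightarrow> nbwalk H xs \<and> (xs \<noteq> [] \<longrightarrow> (last xs, y) \<in> edges H) \<and>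
     (2 \<le> length xs \<longrightarrow> last (butlast xs) \<noteq> y)"
proof (induction xs rule: induct_list012)
  case (3 a b xs)
  then show ?case by (cases xs) (auto simp: nbwalk_Cons)
qed auto

lemma nbwalk_append:
  "\<lbrakk>nbwalk H (xs @ [y]); nbwalk H (y # ys); xs \<noteq> [] \<longrightarrow> ys \<noteq> [] \<longrightarrow> last xs \<noteq> hd ys\<rbrakk>
    \<Longrightarrow> nbwalk H (xs @ y # ys)"
proof (induction xs rule: induct_list012)
  case (2 x)
  then show ?case by (cases ys) auto
next
  case (3 a b xs)
  then show ?case by (cases xs) (auto simp: nbwalk_Cons)
qed simp

lemma nbwalk_rev: "sym (edges H) \<Longrightarrow> nbwalk H (rev q) \<longleftrightarrow> nbwalk H q"
proof (induction q)
  case (Cons x q)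
  have "nbwalk H (rev (x # q)) \<longleftrightarrow>
        nbwalk H q \<and> (q \<noteq> [] \<longrightarrow> (hd q, x) \<in> edges H) \<and> (2 \<le> length q \<longrightarrow> hd (tl q) \<noteq> x)"
    using Cons by (auto simp: nbwalk_snoc last_rev)
  also have "\<dots> \<longleftrightarrow> nbwalk H (x # q)"
    using Cons.prems by (cases q; cases "tl q") (auto dest: symD)
  finally show ?case .
qed simp

lemma nbwalk_take: "nbwalk H q \<Longrightarrow> nbwalk H (take k q)"
  unfolding nbwalk_iff_nth by auto

lemma nbwalk_drop: "nbwalk H q \<Longrightarrow> nbwalk H (drop k q)"
  unfolding nbwalk_iff_nth by (auto simp: add.commute add.left_commute)

section \<open>Coverings and girth\<close>

definition sym_graph :: "'v graph \<Rightarrow> bool" where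
  "sym_graph H \<longleftrightarrow> finite (verts H) \<and> edges H \<subseteq> verts H \<times> verts H \<and> sym (edges H)"

definition covering :: "'v graph \<Rightarrow> 'w graph \<Rightarrow> ('v \<Rightarrow> 'w) \<Rightarrow> bool" where
  "covering H' H p \<longleftrightarrow> sym_graph H' \<and> (\<forall>x\<in>verts H'. p x \<in> verts H) \<and>
     (\<forall>x y. (x, y) \<in> edges H' \<longrightarrow> (p x, p y) \<in> edges H) \<and>
     (\<forall>x\<in>verts H'. \<forall>u. (p x, u) \<in> edges H \<longrightarrow> (\<exists>!y. (x, y) \<in> edges H' \<and> p y = u))"

lemma covering_sym_graph: "covering H' H p \<Longrightarrow> sym_graph H'"
  by (simp add: covering_def)

lemma covering_edge_verts:
  "covering H' H p \<Longrightarrow> (x, y) \<in> edges H' \<Longrightarrow> x \<in> verts H' \<and> y \<in> verts H'"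
  by (auto simp: covering_def sym_graph_def)

lemma covering_sym: "covering H' H p \<Longrightarrow> (x, y) \<in> edges H' \<Longrightarrow> (y, x) \<in> edges H'"
  by (auto simp: covering_def sym_graph_def dest: symD)

lemma covering_id: "sym_graph H \<Longrightarrow> covering H H id"
  by (auto simp: covering_def sym_graph_def)

lemma covering_comp:
  assumes q: "covering H2 H1 q" and p: "covering H1 H0 p"
  shows "covering H2 H0 (p \<circ> q)"
  unfolding covering_def
proof (intro conjI ballI allI impI)
  fix x u assume x: "x \<in> verts H2" and e: "((p \<circ> q) x, u) \<in> edges H0"
  have "q x \<in> verts H1" using x q by (simp add: covering_def)
  then obtain y1 where y1: "(q x, y1) \<in> edges H1" "p y1 = u"
    and uniq1: "\<And>z. (q x, z) \<in> edges H1 \<Longrightarrow> p z = u \<Longrightarrow> z = y1"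
    using e p unfolding covering_def by (metis comp_apply)
  obtain y2 where y2: "(x, y2) \<in> edges H2" "q y2 = y1"
    and uniq2: "\<And>z. (x, z) \<in> edges H2 \<Longrightarrow> q z = y1 \<Longrightarrow> z = y2"
    using x y1(1) q unfolding covering_def by metis
  show "\<exists>!y. (x, y) \<in> edges H2 \<and> (p \<circ> q) y = u"
  proof (rule ex1I[of _ y2])
    fix z assume z: "(x, z) \<in> edges H2 \<and> (p \<circ> q) z = u"
    then have "(q x, q z) \<in> edges H1" using q by (simp add: covering_def)
    then show "z = y2" using uniq1 uniq2 z by simp
  qed (use y1 y2 in simp)
qed (use p q in \<open>auto simp: covering_def\<close>)

lemma covering_cong:
  assumes p: "covering H' H p" and eq: "\<And>x. x \<in> verts H' \<Longrightarrow> q x = p x"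
  shows "covering H' H q"
proof -
  have "\<forall>x y. (x, y) \<in> edges H' \<longrightarrow> q x = p x \<and> q y = p y"
    using covering_edge_verts[OF p] eq by blast
  then show ?thesis
    using p eq unfolding covering_def by (smt (verit, best))
qed

text \<open>Local injectivity of a covering is what preserves non-backtracking.\<close>

lemma nbwalk_map_covering: "covering H' H p \<Longrightarrow> nbwalk H' q \<Longrightarrow> nbwalk H (map p q)"
proof (induction H' q rule: nbwalk.induct)
  case (3 H' x y r)
  have xy: "(x, y) \<in> edges H'" and nb: "r \<noteq> [] \<longrightarrow> hd r \<noteq> x" and rest: "nbwalk H' (y # r)"
    using "3.prems" by auto
  have "r \<noteq> [] \<longrightarrow> p (hd r) \<noteq> p x"
  proof
    assume r: "r \<noteq> []"
    have yx: "(y, x) \<in> edges H'" and yr: "(y, hd r) \<in> edges H'"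
      using covering_sym[OF "3.prems"(1) xy] rest r by (auto simp: neq_Nil_conv)
    have "y \<in> verts H'" using covering_edge_verts[OF "3.prems"(1) yx] by blast
    moreover have "(p y, p x) \<in> edges H" using yx "3.prems"(1) by (simp add: covering_def)
    ultimately have "\<exists>!z. (y, z) \<in> edges H' \<and> p z = p x" using "3.prems"(1) by (simp add: covering_def)
    then show "p (hd r) \<noteq> p x" using yx yr nb r by blast
  qed
  moreover have "(p x, p y) \<in> edges H" using xy "3.prems"(1) by (simp add: covering_def)
  ultimately show ?case using "3.IH"[OF "3.prems"(1) rest] by (cases r) auto
qed auto

definition girth_gt :: "'v graph \<Rightarrow> nat \<Rightarrow> bool" where
  "girth_gt H L \<longleftrightarrow> (\<forall>q. nbwalk H q \<and> 2 \<le> length q \<and> length q \<le> Suc L \<longrightarrow> hd q \<noteq> last q)"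

lemma girth_gt_0: "girth_gt H 0"
  unfolding girth_gt_def by auto

lemma girth_gt_covering: "covering H' H p \<Longrightarrow> girth_gt H L \<Longrightarrow> girth_gt H' L"
  unfolding girth_gt_def
proof (intro allI impI)
  fix q assume c: "covering H' H p"
    and g: "\<forall>q. nbwalk H q \<and> 2 \<le> length q \<and> length q \<le> Suc L \<longrightarrow> hd q \<noteq> last q"
    and q: "nbwalk H' q \<and> 2 \<le> length q \<and> length q \<le> Suc L"
  then have "hd (map p q) \<noteq> last (map p q)" using g nbwalk_map_covering[OF c] by simp
  then show "hd q \<noteq> last q" using q by (cases q) (auto simp: last_map)
qed

text \<open>Gluing the reversal of one walk to the other gives a closed non-backtracking walk.\<close>

lemma girth_gt_fork_ends_differ:
  assumes g: "girth_gt H L" and s: "sym (edges H)"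
    and n1: "nbwalk H (r # T1)" and n2: "nbwalk H (r # T2)"
    and fork: "T1 \<noteq> [] \<longrightarrow> T2 \<noteq> [] \<longrightarrow> hd T1 \<noteq> hd T2"
    and ne: "T1 \<noteq> [] \<or> T2 \<noteq> []" and len: "length T1 + length T2 \<le> L"
  shows "last (r # T1) \<noteq> last (r # T2)"
proof -
  have "nbwalk H (rev T1 @ [r])" using nbwalk_rev[OF s, of "r # T1"] n1 by simp
  then have glued: "nbwalk H (rev T1 @ r # T2)"
    using nbwalk_append n2 fork by (metis last_rev rev_is_Nil_conv)
  have "2 \<le> length (rev T1 @ r # T2)" "length (rev T1 @ r # T2) \<le> Suc L"
    using len ne by (auto simp: Suc_le_eq)
  then have "hd (rev T1 @ r # T2) \<noteq> last (rev T1 @ r # T2)"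
    using g glued unfolding girth_gt_def by blast
  moreover have "hd (rev T1 @ r # T2) = last (r # T1)" by (cases "T1 = []") (auto simp: hd_rev)
  ultimately show ?thesis by simp
qed

section \<open>Balls in coverings of large girth\<close>

definition lift_nbr :: "'b graph \<Rightarrow> ('b \<Rightarrow> 'a) \<Rightarrow> 'b \<Rightarrow> 'a \<Rightarrow> 'b" where
  "lift_nbr H p x u = (THE y. (x, y) \<in> edges H \<and> p y = u)"

lemma lift_nbr:
  assumes "covering H G p" "x \<in> verts H" "(p x, u) \<in> edges G"
  shows "(x, lift_nbr H p x u) \<in> edges H" "p (lift_nbr H p x u) = u"
proof -
  have "\<exists>!y. (x, y) \<in> edges H \<and> p y = u" using assms unfolding covering_def by blast
  from theI'[OF this] show "(x, lift_nbr H p x u) \<in> edges H" "p (lift_nbr H p x u) = u"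
    unfolding lift_nbr_def by auto
qed

lemma lift_nbr_unique:
  assumes c: "covering H G p" and e: "(x, y) \<in> edges H"
  shows "lift_nbr H p x (p y) = y"
proof -
  have "x \<in> verts H" "(p x, p y) \<in> edges G"
    using c e covering_edge_verts[OF c e] by (auto simp: covering_def)
  then have "\<exists>!z. (x, z) \<in> edges H \<and> p z = p y" using c unfolding covering_def by blast
  then show ?thesis unfolding lift_nbr_def using e by (simp add: the1_equality)
qed

fun lift_path :: "'b graph \<Rightarrow> ('b \<Rightarrow> 'a) \<Rightarrow> 'b \<Rightarrow> 'a list \<Rightarrow> 'b list" where
  "lift_path H p x [] = [x]"
| "lift_path H p x (u # w) = x # lift_path H p (lift_nbr H p x u) w"

definition lift_end :: "'b graph \<Rightarrow> ('b \<Rightarrow> 'a) \<Rightarrow> 'b \<Rightarrow> 'a list \<Rightarrow> 'b" where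
  "lift_end H p x w = last (lift_path H p x w)"

lemma lift_path_Cons: "lift_path H p x w = x # tl (lift_path H p x w)"
  by (cases w) auto

lemma lift_path_not_Nil [simp]: "lift_path H p x w \<noteq> []"
  by (cases w) auto

lemma hd_lift_path [simp]: "hd (lift_path H p x w) = x"
  by (cases w) auto

lemma lift_end_Nil [simp]: "lift_end H p x [] = x"
  by (simp add: lift_end_def)

lemma lift_end_Cons [simp]: "lift_end H p x (u # w) = lift_end H p (lift_nbr H p x u) w"
  by (simp add: lift_end_def)

lemma lift_end_snoc: "lift_end H p x (w @ [u]) = lift_nbr H p (lift_end H p x w) u"
  by (induction w arbitrary: x) auto

lemma lift_path_nbwalk:
  assumes c: "covering H G p"
  shows "nbwalk G (v # w) \<Longrightarrow> x \<in> verts H \<Longrightarrow> p x = v \<Longrightarrow>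
     nbwalk H (lift_path H p x w) \<and> map p (lift_path H p x w) = v # w \<and> lift_end H p x w \<in> verts H"
proof (induction w arbitrary: v x)
  case (Cons u w)
  have e: "(v, u) \<in> edges G" and n: "nbwalk G (u # w)" and nb: "w \<noteq> [] \<longrightarrow> hd w \<noteq> v"
    using Cons.prems(1) by auto
  define y where "y = lift_nbr H p x u"
  have y: "(x, y) \<in> edges H" "p y = u" using lift_nbr[OF c Cons.prems(2)] e Cons.prems(3) y_def by auto
  then have "y \<in> verts H" using covering_edge_verts[OF c] by blast
  with Cons.IH[OF n] y(2) have IH: "nbwalk H (lift_path H p y w)" "map p (lift_path H p y w) = u # w"
      "lift_end H p y w \<in> verts H" by auto
  have "map p (tl (lift_path H p y w)) = w" using IH(2) by (simp add: map_tl)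
  then have "tl (lift_path H p y w) \<noteq> [] \<longrightarrow> hd (tl (lift_path H p y w)) \<noteq> x"
    using nb Cons.prems(3) by (metis hd_map map_is_Nil_conv)
  then have "nbwalk H (x # lift_path H p y w)"
    using IH(1) y(1) by (simp add: nbwalk_Cons)
  then show ?case using IH Cons.prems(3) y_def by simp
qed simp

lemma lift_end_image:
  "covering H G p \<Longrightarrow> nbwalk G (v # w) \<Longrightarrow> x \<in> verts H \<Longrightarrow> p x = v \<Longrightarrow>
     p (lift_end H p x w) = last (v # w)"
  using lift_path_nbwalk[of H G p v w x] unfolding lift_end_def
  by (metis last_map list.distinct(1) lift_path_Cons)

lemma lift_end_diverge:
  assumes c: "covering H G p" and g: "girth_gt H L"
    and n1: "nbwalk G (v # w1)" and n2: "nbwalk G (v # w2)" and x: "x \<in> verts H" "p x = v"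
    and len: "length w1 + length w2 \<le> L" and ne: "w1 \<noteq> [] \<or> w2 \<noteq> []"
    and fork: "w1 \<noteq> [] \<longrightarrow> w2 \<noteq> [] \<longrightarrow> hd w1 \<noteq> hd w2"
  shows "lift_end H p x w1 \<noteq> lift_end H p x w2"
proof -
  define T1 T2 where "T1 = tl (lift_path H p x w1)" and "T2 = tl (lift_path H p x w2)"
  have Q1: "lift_path H p x w1 = x # T1" and Q2: "lift_path H p x w2 = x # T2"
    unfolding T1_def T2_def by (rule lift_path_Cons)+
  have A1: "nbwalk H (x # T1)" "map p T1 = w1"
    using lift_path_nbwalk[OF c n1 x] unfolding Q1 by auto
  have A2: "nbwalk H (x # T2)" "map p T2 = w2"
    using lift_path_nbwalk[OF c n2 x] unfolding Q2 by auto
  have "T1 \<noteq> [] \<longrightarrow> T2 \<noteq> [] \<longrightarrow> hd T1 \<noteq> hd T2"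
    using fork A1(2) A2(2) by (metis Nil_is_map_conv hd_map)
  then have "last (x # T1) \<noteq> last (x # T2)"
    using girth_gt_fork_ends_differ[OF g _ A1(1) A2(1)] c ne len A1(2) A2(2)
    by (auto simp: covering_def sym_graph_def)
  then show ?thesis by (simp add: lift_end_def Q1 Q2)
qed

text \<open>After their common prefix the two lifts fork, so below the girth their ends differ.\<close>

lemma lift_end_inj:
  assumes c: "covering H G p" and g: "girth_gt H L"
  shows "nbwalk G (v # w) \<Longrightarrow> nbwalk G (v # w') \<Longrightarrow> x \<in> verts H \<Longrightarrow> p x = v \<Longrightarrow>
    length w + length w' \<le> L \<Longrightarrow> lift_end H p x w = lift_end H p x w' \<Longrightarrow> w = w'"
proof (induction w arbitrary: v x w')
  case Nil
  then show ?case using lift_end_diverge[OF c g Nil.prems(1-5)] by auto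
next
  case (Cons u w)
  show ?case
  proof (cases "w' \<noteq> [] \<and> hd w' = u")
    case True
    then obtain vs where w': "w' = u # vs" by (cases w') auto
    define y where "y = lift_nbr H p x u"
    have "(v, u) \<in> edges G" using Cons.prems(1) by simp
    then have y: "(x, y) \<in> edges H" "p y = u"
      using lift_nbr[OF c Cons.prems(3)] Cons.prems(4) y_def by auto
    then have "y \<in> verts H" using covering_edge_verts[OF c] by blast
    then have "w = vs"
      using Cons.IH[where v = u and x = y and w' = vs] Cons.prems w' y(2) y_def by auto
    then show ?thesis using w' by simp
  next
    case False
    then show ?thesis using lift_end_diverge[OF c g Cons.prems(1-5)] Cons.prems(6) by auto
  qed
qed

lemma nb_tree_verts: "w \<in> verts (nb_tree G v) \<longleftrightarrow> nbwalk G (v # w)"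
  by (simp add: nb_tree_def nb_walk_iff_nbwalk)

lemma nb_tree_edges:
  "(a, b) \<in> edges (nb_tree G v) \<longleftrightarrow>
     nbwalk G (v # a) \<and> nbwalk G (v # b) \<and> ((\<exists>x. b = a @ [x]) \<or> (\<exists>x. a = b @ [x]))"
  by (simp add: nb_tree_def nb_walk_iff_nbwalk)

lemma nb_tree_reach_length: "([], w) \<in> edges (nb_tree G v) ^^ k \<Longrightarrow> length w \<le> k"
proof (induction k arbitrary: w)
  case (Suc k)
  then obtain b where "([], b) \<in> edges (nb_tree G v) ^^ k" "(b, w) \<in> edges (nb_tree G v)"
    by (meson relpow_Suc_E)
  then have "length b \<le> k" "length w \<le> Suc (length b)" using Suc.IH by (auto simp: nb_tree_edges)
  then show ?case by simp
qed simp

lemma nb_tree_reach: "nbwalk G (v # w) \<Longrightarrow> ([], w) \<in> edges (nb_tree G v) ^^ length w"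
proof (induction w rule: rev_induct)
  case (snoc x w)
  then have "nbwalk G (v # w)" using nbwalk_snoc[of G "v # w" x] by simp
  moreover from this have "(w, w @ [x]) \<in> edges (nb_tree G v)"
    using snoc.prems by (simp add: nb_tree_edges)
  ultimately show ?case using snoc.IH relpow_Suc_I by fastforce
qed simp

lemma gball_nb_tree: "gball (nb_tree G v) [] h = {w. nbwalk G (v # w) \<and> length w \<le> h}"
proof -
  have "(\<exists>k\<le>h. ([], w) \<in> edges (nb_tree G v) ^^ k) \<longleftrightarrow> length w \<le> h" if "nbwalk G (v # w)" for w
    using nb_tree_reach[OF that] nb_tree_reach_length by (meson le_trans order_refl)
  then show ?thesis unfolding gball_def nb_tree_verts by blast
qed

lemma lift_end_edge:
  assumes c: "covering H G p" and r: "r \<in> verts H" "p r = v" and n: "nbwalk G (v # w @ [x])"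
  shows "(lift_end H p r w, lift_end H p r (w @ [x])) \<in> edges H"
proof -
  have n0: "nbwalk G (v # w)" and e: "(last (v # w), x) \<in> edges G"
    using n nbwalk_snoc[of G "v # w" x] by auto
  have "lift_end H p r w \<in> verts H" "p (lift_end H p r w) = last (v # w)"
    using lift_path_nbwalk[OF c n0 r] lift_end_image[OF c n0 r] by auto
  then show ?thesis using lift_nbr(1)[OF c] e by (simp add: lift_end_snoc)
qed

lemma lift_end_reach:
  assumes c: "covering H G p" and r: "r \<in> verts H" "p r = v"
  shows "nbwalk G (v # w) \<Longrightarrow> (r, lift_end H p r w) \<in> edges H ^^ length w"
proof (induction w rule: rev_induct)
  case (snoc x w)
  then have "nbwalk G (v # w)" using nbwalk_snoc[of G "v # w" x] by simp
  then show ?case using snoc lift_end_edge[OF c r] relpow_Suc_I by fastforce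
qed simp

text \<open>The neighbour is the end of the walk extended by one step, unless that step would
  backtrack; then it is the end of the walk with its last step removed.\<close>

lemma lift_end_nbr:
  assumes c: "covering H G p" and n: "nbwalk G (v # w)" and r: "r \<in> verts H" "p r = v"
    and e: "(lift_end H p r w, y) \<in> edges H"
  obtains w' where "nbwalk G (v # w')" "lift_end H p r w' = y"
    "(\<exists>x. w' = w @ [x]) \<or> (\<exists>x. w = w' @ [x])"
proof -
  have end_w: "p (lift_end H p r w) = last (v # w)" by (rule lift_end_image[OF c n r])
  have "(p (lift_end H p r w), p y) \<in> edges G" using e c by (simp add: covering_def)
  then have eG: "(last (v # w), p y) \<in> edges G" by (simp only: end_w)
  have y: "lift_nbr H p (lift_end H p r w) (p y) = y" by (rule lift_nbr_unique[OF c e])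
  show ?thesis
  proof (cases "2 \<le> length (v # w) \<and> last (butlast (v # w)) = p y")
    case False
    then have "nbwalk G ((v # w) @ [p y])" using n eG nbwalk_snoc[of G "v # w" "p y"] by auto
    moreover have "lift_end H p r (w @ [p y]) = y" using y by (simp add: lift_end_snoc)
    ultimately show ?thesis by (intro that) auto
  next
    case True
    then obtain w0 a where w: "w = w0 @ [a]" by (cases w rule: rev_cases) auto
    have n0: "nbwalk G (v # w0)" using n nbwalk_snoc[of G "v # w0" a] w by auto
    have before: "last (v # w0) = p y" using True w by (simp add: butlast_append)
    have "(lift_end H p r w0, lift_end H p r w) \<in> edges H"
      using lift_end_edge[OF c r, of w0 a] n unfolding w by simp
    then have "lift_nbr H p (lift_end H p r w) (p (lift_end H p r w0)) = lift_end H p r w0"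
      by (rule lift_nbr_unique[OF c covering_sym[OF c]])
    moreover have "p (lift_end H p r w0) = p y" using lift_end_image[OF c n0 r] before by simp
    ultimately have "lift_end H p r w0 = y" using y by simp
    then show ?thesis using n0 w by (intro that) auto
  qed
qed

lemma lift_end_reach_back:
  assumes c: "covering H G p" and r: "r \<in> verts H" "p r = v"
  shows "(r, y) \<in> edges H ^^ k \<Longrightarrow> \<exists>w. nbwalk G (v # w) \<and> length w \<le> k \<and> lift_end H p r w = y"
proof (induction k arbitrary: y)
  case 0
  then show ?case by (intro exI[of _ "[]"]) simp
next
  case (Suc k)
  then obtain z where z: "(r, z) \<in> edges H ^^ k" "(z, y) \<in> edges H" by (meson relpow_Suc_E)
  obtain w where w: "nbwalk G (v # w)" "length w \<le> k" "lift_end H p r w = z" using Suc.IH z(1) by blast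
  obtain w' where w': "nbwalk G (v # w')" "lift_end H p r w' = y"
    and "(\<exists>x. w' = w @ [x]) \<or> (\<exists>x. w = w' @ [x])"
    using lift_end_nbr[OF c w(1) r] z(2) w(3) by blast
  then have "length w' \<le> Suc (length w)" by auto
  then show ?case using w(2) w' by (intro exI[of _ w']) auto
qed

lemma gball_covering:
  assumes c: "covering H G p" and r: "r \<in> verts H" "p r = v"
  shows "gball H r h = lift_end H p r ` {w. nbwalk G (v # w) \<and> length w \<le> h}"
proof
  show "gball H r h \<subseteq> lift_end H p r ` {w. nbwalk G (v # w) \<and> length w \<le> h}"
  proof
    fix y assume "y \<in> gball H r h"
    then obtain k where "k \<le> h" "(r, y) \<in> edges H ^^ k" unfolding gball_def by blast
    then obtain w where "nbwalk G (v # w)" "length w \<le> h" "lift_end H p r w = y"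
      using lift_end_reach_back[OF c r] le_trans by blast
    then show "y \<in> lift_end H p r ` {w. nbwalk G (v # w) \<and> length w \<le> h}" by blast
  qed
  show "lift_end H p r ` {w. nbwalk G (v # w) \<and> length w \<le> h} \<subseteq> gball H r h"
  proof clarify
    fix w assume w: "nbwalk G (v # w)" "length w \<le> h"
    then have "lift_end H p r w \<in> verts H" using lift_path_nbwalk[OF c _ r] by blast
    then show "lift_end H p r w \<in> gball H r h"
      unfolding gball_def using lift_end_reach[OF c r w(1)] w(2) by blast
  qed
qed

lemma lift_end_edge_iff:
  assumes c: "covering H G p" and g: "girth_gt H (2 * h + 2)" and r: "r \<in> verts H" "p r = v"
    and a: "nbwalk G (v # a)" "length a \<le> h" and b: "nbwalk G (v # b)" "length b \<le> h"
  shows "(lift_end H p r a, lift_end H p r b) \<in> edges H \<longleftrightarrow> (a, b) \<in> edges (nb_tree G v)"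
proof
  assume "(lift_end H p r a, lift_end H p r b) \<in> edges H"
  then obtain w where w: "nbwalk G (v # w)" "lift_end H p r w = lift_end H p r b"
    and step: "(\<exists>x. w = a @ [x]) \<or> (\<exists>x. a = w @ [x])"
    by (rule lift_end_nbr[OF c a(1) r])
  then have "length w \<le> Suc h" using a(2) by auto
  then have "w = b" using lift_end_inj[OF c g w(1) b(1) r] w(2) b(2) by simp
  then show "(a, b) \<in> edges (nb_tree G v)" using step a(1) b(1) by (auto simp: nb_tree_edges)
next
  assume "(a, b) \<in> edges (nb_tree G v)"
  then have "(\<exists>x. b = a @ [x]) \<or> (\<exists>x. a = b @ [x])" by (simp add: nb_tree_edges)
  then show "(lift_end H p r a, lift_end H p r b) \<in> edges H"
  proof (elim disjE exE)
    fix x assume "b = a @ [x]"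
    then show ?thesis using lift_end_edge[OF c r, of a x] b(1) by simp
  next
    fix x assume "a = b @ [x]"
    then show ?thesis using lift_end_edge[OF c r, of b x] a(1) covering_sym[OF c] by simp
  qed
qed

text \<open>This is where large girth enters: below half the girth a covering looks like the universal
  cover, i.e. the tree of non-backtracking walks.\<close>

lemma ball_iso_nb_tree:
  assumes c: "covering H G p" and g: "girth_gt H (2 * h + 2)" and r: "r \<in> verts H" "p r = v"
  shows "ball_iso H r (nb_tree G v) [] h"
proof -
  define B where "B = {w. nbwalk G (v # w) \<and> length w \<le> h}"
  define f where "f = lift_end H p r"
  have ball_H: "gball H r h = f ` B" unfolding f_def B_def by (rule gball_covering[OF c r])
  have "inj_on f B"
  proof (rule inj_onI)
    fix a b assume "a \<in> B" "b \<in> B" "f a = f b"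
    then show "a = b" using lift_end_inj[OF c g, of v a b r] r by (simp add: B_def f_def)
  qed
  then have bij: "bij_betw f B (gball H r h)" using ball_H by (simp add: bij_betw_def)
  define f' where "f' = inv_into B f"
  have f'_r: "f' r = []"
    using inv_into_f_f[OF \<open>inj_on f B\<close>, of "[]"] by (simp add: f'_def f_def B_def)
  have f': "f' x \<in> B" "f (f' x) = x" if "x \<in> gball H r h" for x
    using that ball_H by (auto simp: f'_def intro: inv_into_into f_inv_into_f)
  show ?thesis unfolding ball_iso_def
  proof (intro exI[of _ f'] conjI ballI)
    show "bij_betw f' (gball H r h) (gball (nb_tree G v) [] h)"
      using bij_betw_inv_into[OF bij] by (simp add: f'_def gball_nb_tree B_def)
  next
    fix x y assume x: "x \<in> gball H r h" and y: "y \<in> gball H r h"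
    have walks: "nbwalk G (v # f' x)" "length (f' x) \<le> h" "nbwalk G (v # f' y)" "length (f' y) \<le> h"
      using f'(1) x y by (auto simp: B_def)
    show "(x, y) \<in> edges H \<longleftrightarrow> (f' x, f' y) \<in> edges (nb_tree G v)"
      using lift_end_edge_iff[OF c g r walks] f'(2)[OF x] f'(2)[OF y] by (simp add: f_def)
  qed (rule f'_r)
qed

section \<open>A tower of 2-lifts of growing girth\<close>

definition bit_lift ::
  "('a \<times> bool list) graph \<Rightarrow> (('a \<times> bool list) \<times> ('a \<times> bool list) \<Rightarrow> bool) \<Rightarrow> ('a \<times> bool list) graph"
where "bit_lift H s = map_graph (\<lambda>((x, bs), b). (x, b # bs)) (two_lift H s)"

definition bit_proj :: "'a \<times> bool list \<Rightarrow> 'a \<times> bool list" where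
  "bit_proj x = (fst x, tl (snd x))"

lemma is_two_lift_of_iff:
  "is_two_lift_of H' H \<longleftrightarrow> (\<exists>s. (\<forall>u w. s (u, w) = s (w, u)) \<and> H' = bit_lift H s)"
  by (simp add: is_two_lift_of_def bit_lift_def)

lemma bit_lift_verts: "(x, l) \<in> verts (bit_lift H s) \<longleftrightarrow> (\<exists>b bs. l = b # bs \<and> (x, bs) \<in> verts H)"
  by (force simp: bit_lift_def map_graph_def two_lift_def)

lemma bit_lift_edges:
  "((x, l), (y, l')) \<in> edges (bit_lift H s) \<longleftrightarrow>
     (\<exists>b bs c cs. l = b # bs \<and> l' = c # cs \<and> ((x, bs), (y, cs)) \<in> edges H \<and>
                 c = (b \<noteq> s ((x, bs), (y, cs))))"
    (is "_ \<longleftrightarrow> (\<exists>b bs c cs. ?E b bs c cs)")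
proof
  assume "((x, l), (y, l')) \<in> edges (bit_lift H s)"
  then show "\<exists>b bs c cs. ?E b bs c cs" by (auto simp: bit_lift_def map_graph_def two_lift_def)
next
  assume "\<exists>b bs c cs. ?E b bs c cs"
  then obtain b bs c cs where "?E b bs c cs" by blast
  then show "((x, l), (y, l')) \<in> edges (bit_lift H s)"
    by (auto simp: bit_lift_def map_graph_def two_lift_def
        intro!: image_eqI[of _ _ "(((x, bs), b), ((y, cs), c))"])
qed

lemma bit_lift_edge_flip:
  "(u, w) \<in> edges (bit_lift H s) \<Longrightarrow> hd (snd w) = (hd (snd u) \<noteq> s (bit_proj u, bit_proj w))"
  by (cases u; cases w) (auto simp: bit_lift_edges bit_proj_def)

lemma covering_bit_lift:
  assumes H: "sym_graph H" and s: "\<And>u w. s (u, w) = s (w, u)"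
  shows "covering (bit_lift H s) H bit_proj"
  unfolding covering_def
proof (intro conjI ballI allI impI)
  have "verts (bit_lift H s) = (\<lambda>((x, bs), b). (x, b # bs)) ` (verts H \<times> UNIV)"
    by (simp add: bit_lift_def map_graph_def two_lift_def)
  then have "finite (verts (bit_lift H s))" using H by (simp add: sym_graph_def)
  moreover have "edges (bit_lift H s) \<subseteq> verts (bit_lift H s) \<times> verts (bit_lift H s)"
  proof (clarify)
    fix x l y l' assume "((x, l), (y, l')) \<in> edges (bit_lift H s)"
    moreover have "edges H \<subseteq> verts H \<times> verts H" using H by (simp add: sym_graph_def)
    ultimately show "(x, l) \<in> verts (bit_lift H s) \<and> (y, l') \<in> verts (bit_lift H s)"
      by (auto simp: bit_lift_edges bit_lift_verts)
  qed
  moreover have "sym (edges (bit_lift H s))"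
  proof (rule symI, clarify)
    fix x l y l' assume "((x, l), (y, l')) \<in> edges (bit_lift H s)"
    moreover have "sym (edges H)" using H by (simp add: sym_graph_def)
    ultimately show "((y, l'), (x, l)) \<in> edges (bit_lift H s)"
      using s by (auto simp: bit_lift_edges dest: symD)
  qed
  ultimately show "sym_graph (bit_lift H s)" by (simp add: sym_graph_def)
next
  fix u w assume "(u, w) \<in> edges (bit_lift H s)"
  then show "(bit_proj u, bit_proj w) \<in> edges H"
    by (cases u; cases w) (auto simp: bit_lift_edges bit_proj_def)
next
  fix u assume "u \<in> verts (bit_lift H s)"
  then show "bit_proj u \<in> verts H" by (cases u) (auto simp: bit_lift_verts bit_proj_def)
next
  fix u z assume u: "u \<in> verts (bit_lift H s)" and e: "(bit_proj u, z) \<in> edges H"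
  obtain x b bs where ux: "u = (x, b # bs)" "(x, bs) \<in> verts H"
    using u by (cases u) (auto simp: bit_lift_verts)
  obtain y cs where z: "z = (y, cs)" by (cases z)
  define c where "c = (b \<noteq> s ((x, bs), (y, cs)))"
  show "\<exists>!w. (u, w) \<in> edges (bit_lift H s) \<and> bit_proj w = z"
    by (rule ex1I[of _ "(y, c # cs)"])
       (use e ux z c_def in \<open>auto simp: bit_lift_edges bit_proj_def\<close>)
qed

lemma parity_of_flips:
  assumes "\<And>i. i < k \<Longrightarrow> f (Suc i) = (f i \<noteq> P i)"
  shows "f k = (f 0 \<noteq> odd (card {i. i < k \<and> P i}))"
  using assms
proof (induction k)
  case (Suc k)
  have "{i. i < Suc k \<and> P i} = {i. i < k \<and> P i} \<union> (if P k then {k} else {})"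
    by (auto simp: less_Suc_eq)
  then show ?case using Suc by auto
qed simp

text \<open>Along an edge of a bit lift the top bit flips exactly when the projected edge is signed.\<close>

lemma bit_lift_closed_walk_even:
  assumes q: "nbwalk (bit_lift H s) q" "q \<noteq> []" "hd q = last q"
  shows "even (card {i. Suc i < length q \<and> s (bit_proj (q ! i), bit_proj (q ! Suc i))})"
proof -
  define k where "k = length q - 1"
  have "hd (snd (q ! Suc i)) = (hd (snd (q ! i)) \<noteq> s (bit_proj (q ! i), bit_proj (q ! Suc i)))"
    if "i < k" for i
  proof -
    have "(q ! i, q ! Suc i) \<in> edges (bit_lift H s)"
      using that q(1) unfolding k_def nbwalk_iff_nth by auto
    then show ?thesis by (rule bit_lift_edge_flip)
  qed
  from parity_of_flips[of k "\<lambda>i. hd (snd (q ! i))", OF this]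
  have "hd (snd (q ! k)) = (hd (snd (q ! 0)) \<noteq> odd (card {i. i < k \<and> s (bit_proj (q ! i), bit_proj (q ! Suc i))}))" .
  moreover have "q ! k = q ! 0" using q(2,3) by (simp add: k_def hd_conv_nth last_conv_nth)
  moreover have "{i. i < k \<and> s (bit_proj (q ! i), bit_proj (q ! Suc i))} =
      {i. Suc i < length q \<and> s (bit_proj (q ! i), bit_proj (q ! Suc i))}"
    by (auto simp: k_def)
  ultimately show ?thesis by (cases "hd (snd (q ! 0))") simp_all
qed

lemma covering_two_lift: "is_two_lift_of H' H \<Longrightarrow> sym_graph H \<Longrightarrow> covering H' H bit_proj"
  using covering_bit_lift by (auto simp: is_two_lift_of_iff)

lemma two_lift_level:
  assumes "is_two_lift_of H' H" "\<And>x. x \<in> verts H \<Longrightarrow> length (snd x) = n" "x \<in> verts H'"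
  shows "length (snd x) = Suc n"
  using assms by (cases x) (force simp: is_two_lift_of_iff bit_lift_verts)

lemma base_embed_covering:
  assumes "finite_loopless_graph G"
  shows "covering (base_embed G) G fst"
  unfolding covering_def
proof (intro conjI ballI allI impI)
  show "sym_graph (base_embed G)"
    using assms by (auto simp: sym_graph_def finite_loopless_graph_def base_embed_def map_graph_def
        sym_def)
next
  fix x u assume "x \<in> verts (base_embed G)" "(fst x, u) \<in> edges G"
  then show "\<exists>!y. (x, y) \<in> edges (base_embed G) \<and> fst y = u"
    by (intro ex1I[of _ "(u, [])"]) (auto simp: base_embed_def map_graph_def)
qed (auto simp: base_embed_def map_graph_def)

text \<open>The vertex \<open>(v, bs)\<close> of a tower level lies over the vertex \<open>level_proj d (v, bs)\<close> of level \<open>d\<close>: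
  each lift pushes one bit, so only the last \<open>d\<close> bits are remembered.\<close>

definition level_proj :: "nat \<Rightarrow> 'a \<times> bool list \<Rightarrow> 'a \<times> bool list" where
  "level_proj d x = (fst x, drop (length (snd x) - d) (snd x))"

lemma level_proj_level_proj: "d \<le> k \<Longrightarrow> level_proj d (level_proj k x) = level_proj d x"
  by (simp add: level_proj_def) (rule arg_cong[where f = "\<lambda>i. drop i (snd x)"], linarith)

lemma level_proj_id: "length (snd x) = d \<Longrightarrow> level_proj d x = x"
  by (simp add: level_proj_def)

lemma bit_proj_level_proj: "k < length (snd x) \<Longrightarrow> bit_proj (level_proj (Suc k) x) = level_proj k x"
  by (simp add: level_proj_def bit_proj_def tl_drop drop_Suc[symmetric] Suc_diff_Suc)

lemma level_proj_bit_proj: "d \<le> n \<Longrightarrow> length (snd x) = Suc n \<Longrightarrow> level_proj d (bit_proj x) = level_proj d x"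
  by (simp add: level_proj_def bit_proj_def drop_Suc[symmetric] Suc_diff_le)

definition over_edge ::
  "nat \<Rightarrow> ('a \<times> bool list) \<times> ('a \<times> bool list) \<Rightarrow> ('a \<times> bool list) \<times> ('a \<times> bool list) \<Rightarrow> bool"
where "over_edge d e z \<longleftrightarrow>
  (level_proj d (fst z), level_proj d (snd z)) = e \<or> (level_proj d (snd z), level_proj d (fst z)) = e"

lemma over_edge_bit_proj_level_proj:
  assumes "d \<le> k" "k < length (snd a)" "k < length (snd b)"
  shows "over_edge d e (bit_proj (level_proj (Suc k) a), bit_proj (level_proj (Suc k) b)) \<longleftrightarrow>
    (level_proj d a, level_proj d b) = e \<or> (level_proj d b, level_proj d a) = e"
  using assms by (simp add: over_edge_def bit_proj_level_proj level_proj_level_proj)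

definition edge_list :: "'v graph \<Rightarrow> ('v \<times> 'v) list" where
  "edge_list H = (SOME l. set l = edges H)"

lemma set_edge_list: "sym_graph H \<Longrightarrow> set (edge_list H) = edges H"
  unfolding edge_list_def sym_graph_def
  by (rule someI_ex, rule finite_list) (meson finite_SigmaI finite_subset)

text \<open>The state \<open>(d, l, H)\<close> at step \<open>n\<close>: \<open>H\<close> is the current graph, \<open>d\<close> the level at which the
  current stage started, and \<open>l\<close> the edges of that level still to be split.  Splitting an edge
  \<open>e\<close> means a 2-lift crossing exactly the edges over \<open>e\<close>; a stage ends with a trivial lift,
  which starts the next stage.\<close>

primrec tower_state ::
  "'a graph \<Rightarrow> nat \<Rightarrow> nat \<times> (('a \<times> bool list) \<times> ('a \<times> bool list)) list \<times> ('a \<times> bool list) graph"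
where
  "tower_state G 0 = (0, edge_list (base_embed G), base_embed G)"
| "tower_state G (Suc n) = (case tower_state G n of (d, l, H) \<Rightarrow>
     (case l of
        [] \<Rightarrow> (Suc n, edge_list (bit_lift H (\<lambda>_. False)), bit_lift H (\<lambda>_. False))
      | e # l' \<Rightarrow> (d, l', bit_lift H (over_edge d e))))"

definition tower :: "'a graph \<Rightarrow> nat \<Rightarrow> ('a \<times> bool list) graph" where
  "tower G n = snd (snd (tower_state G n))"

definition stage_start :: "'a graph \<Rightarrow> nat \<Rightarrow> bool" where
  "stage_start G d \<longleftrightarrow> tower_state G d = (d, edge_list (tower G d), tower G d)"

lemma tower_0: "tower G 0 = base_embed G"
  by (simp add: tower_def)

lemma tower_Suc: "is_two_lift_of (tower G (Suc n)) (tower G n)"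
proof -
  obtain d l H where S: "tower_state G n = (d, l, H)" by (metis prod.exhaust)
  show ?thesis
  proof (cases l)
    case Nil
    then show ?thesis unfolding is_two_lift_of_iff using S
      by (intro exI[of _ "\<lambda>_. False"]) (simp add: tower_def)
  next
    case (Cons e l')
    have "over_edge d e (u, w) = over_edge d e (w, u)" for u w by (auto simp: over_edge_def)
    then show ?thesis unfolding is_two_lift_of_iff using S Cons
      by (intro exI[of _ "over_edge d e"]) (simp add: tower_def)
  qed
qed

lemma tower_level: "x \<in> verts (tower G n) \<Longrightarrow> length (snd x) = n"
proof (induction n arbitrary: x)
  case 0
  then show ?case by (auto simp: tower_0 base_embed_def map_graph_def)
next
  case (Suc n)
  then show ?case using two_lift_level[OF tower_Suc] by blast
qed

lemma sym_graph_tower: "finite_loopless_graph G \<Longrightarrow> sym_graph (tower G n)"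
proof (induction n)
  case 0
  then show ?case using covering_sym_graph[OF base_embed_covering] by (simp add: tower_0)
next
  case (Suc n)
  then show ?case using covering_sym_graph[OF covering_two_lift[OF tower_Suc]] by blast
qed

lemma covering_tower_Suc: "finite_loopless_graph G \<Longrightarrow> covering (tower G (Suc n)) (tower G n) bit_proj"
  by (rule covering_two_lift[OF tower_Suc sym_graph_tower])

lemma covering_tower_self: "finite_loopless_graph G \<Longrightarrow> covering (tower G n) (tower G n) (level_proj n)"
  by (rule covering_cong[OF covering_id[OF sym_graph_tower]]) (simp_all add: level_proj_id tower_level)

lemma covering_tower_level_proj:
  assumes G: "finite_loopless_graph G"
  shows "m \<le> n \<Longrightarrow> covering (tower G n) (tower G m) (level_proj m)"
proof (induction n)
  case 0
  then show ?case using covering_tower_self[OF G] by simp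
next
  case (Suc n)
  show ?case
  proof (cases "m = Suc n")
    case True
    then show ?thesis using covering_tower_self[OF G] by simp
  next
    case False
    then have "covering (tower G (Suc n)) (tower G m) (level_proj m \<circ> bit_proj)"
      using covering_comp[OF covering_tower_Suc[OF G] Suc.IH] Suc.prems by simp
    then show ?thesis
    proof (rule covering_cong)
      fix x assume "x \<in> verts (tower G (Suc n))"
      then have "length (snd x) = Suc n" by (rule tower_level)
      then show "level_proj m x = (level_proj m \<circ> bit_proj) x"
        using False Suc.prems level_proj_bit_proj[of m n x] by simp
    qed
  qed
qed

lemma covering_tower_base:
  assumes G: "finite_loopless_graph G"
  shows "covering (tower G n) G fst"
proof -
  have "covering (tower G n) (base_embed G) (level_proj 0)"
    using covering_tower_level_proj[OF G le0] by (simp add: tower_0)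
  from covering_comp[OF this base_embed_covering[OF G]] show ?thesis
    by (rule covering_cong) (simp add: level_proj_def)
qed

lemma stage_start_0: "stage_start G 0"
  by (simp add: stage_start_def tower_0)

lemma tower_state_in_stage:
  assumes d: "stage_start G d"
  shows "j \<le> length (edge_list (tower G d)) \<Longrightarrow>
    \<exists>H. tower_state G (d + j) = (d, drop j (edge_list (tower G d)), H)"
proof (induction j)
  case 0
  then show ?case using d by (simp add: stage_start_def)
next
  case (Suc j)
  then obtain H where "tower_state G (d + j) =
      (d, edge_list (tower G d) ! j # drop (Suc j) (edge_list (tower G d)), H)"
    by (auto simp: Cons_nth_drop_Suc)
  then show ?case by simp
qed

lemma tower_in_stage:
  assumes "stage_start G d" "j < length (edge_list (tower G d))"
  shows "tower G (Suc (d + j)) = bit_lift (tower G (d + j)) (over_edge d (edge_list (tower G d) ! j))"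
proof -
  obtain H where "tower_state G (d + j) =
      (d, edge_list (tower G d) ! j # drop (Suc j) (edge_list (tower G d)), H)"
    using tower_state_in_stage[OF assms(1), of j] assms(2) by (auto simp: Cons_nth_drop_Suc)
  then show ?thesis by (simp add: tower_def)
qed

lemma stage_start_next:
  assumes "stage_start G d"
  shows "stage_start G (Suc (d + length (edge_list (tower G d))))"
proof -
  obtain H where "tower_state G (d + length (edge_list (tower G d))) = (d, [], H)"
    using tower_state_in_stage[OF assms, of "length (edge_list (tower G d))"] by auto
  then show ?thesis by (simp add: stage_start_def tower_def)
qed

lemma stage_start_unbounded: "\<exists>d \<ge> n. stage_start G d"
proof (induction n)
  case 0
  then show ?case using stage_start_0 by blast
next
  case (Suc n)
  then obtain d where "n \<le> d" "stage_start G d" by blast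
  then show ?case using stage_start_next by (intro exI[of _ "Suc (d + length (edge_list (tower G d)))"]) auto
qed

lemma girth_gt_nth_distinct:
  assumes g: "girth_gt H L" and q: "nbwalk H q" and ij: "i < j" "j < length q" "j - i \<le> L"
  shows "q ! i \<noteq> q ! j"
proof -
  define q' where "q' = take (Suc (j - i)) (drop i q)"
  have "nbwalk H q'" unfolding q'_def using q by (intro nbwalk_take nbwalk_drop)
  moreover have "length q' = Suc (j - i)" using ij by (simp add: q'_def)
  ultimately have "hd q' \<noteq> last q'" using g ij unfolding girth_gt_def by auto
  moreover have "hd q' = q ! i" "last q' = q ! j"
    using ij \<open>length q' = Suc (j - i)\<close> by (simp_all add: q'_def hd_conv_nth last_conv_nth)
  ultimately show ?thesis by simp
qed

text \<open>A closed non-backtracking walk of length just above the girth is a cycle, so it runs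
  through its first edge exactly once.\<close>

lemma closed_walk_crosses_first_edge_once:
  assumes g: "girth_gt H L" and q: "nbwalk H q" "length q = L + 2" "hd q = last q"
  shows "{i. Suc i < length q \<and> ((q ! i, q ! Suc i) = (q ! 0, q ! 1) \<or> (q ! Suc i, q ! i) = (q ! 0, q ! 1))}
    = {0}"
proof -
  have dist: "q ! a \<noteq> q ! b" if "a < b" "b \<le> L" for a b
    using girth_gt_nth_distinct[OF g q(1) that(1)] that q(2) by simp
  have "i = 0" if i: "Suc i < length q" and e: "(q ! i, q ! Suc i) = (q ! 0, q ! 1) \<or> (q ! Suc i, q ! i) = (q ! 0, q ! 1)"
    for i
  proof (rule ccontr)
    assume "i \<noteq> 0"
    then have "1 \<le> i" "i \<le> L" using i q(2) by auto
    show False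
    proof (cases "i = 1")
      case True
      have "q ! (0 + 2) \<noteq> q ! 0" using q(1,2) i True unfolding nbwalk_iff_nth by simp
      then show False using e True dist[of 0 1] \<open>i \<le> L\<close> by (auto simp: numeral_2_eq_2)
    next
      case False
      then show False using e dist[of 0 i] dist[of 1 i] \<open>1 \<le> i\<close> \<open>i \<le> L\<close> by auto
    qed
  qed
  then show ?thesis using q(2) by auto
qed

text \<open>Let \<open>q\<close> be a closed walk of length \<open>L + 1\<close> at the end of a stage.  Its image in the
  base of the stage is a cycle, hence crosses its first edge \<open>e\<close> once; so the image of \<open>q\<close> in
  the lift that split \<open>e\<close> changes its top bit an odd number of times and cannot close.\<close>

lemma girth_gt_stage_end:
  assumes G: "finite_loopless_graph G" and d: "stage_start G d" and g: "girth_gt (tower G d) L"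
  shows "girth_gt (tower G (d + length (edge_list (tower G d)))) (Suc L)"
  unfolding girth_gt_def
proof (intro allI impI notI)
  define E where "E = edge_list (tower G d)"
  define n where "n = d + length E"
  fix q assume q: "nbwalk (tower G (d + length (edge_list (tower G d)))) q \<and> 2 \<le> length q \<and>
      length q \<le> Suc (Suc L)" and closed: "hd q = last q"
  then have q_walk: "nbwalk (tower G n) q" and "q \<noteq> []" by (auto simp: n_def E_def)
  define Q where "Q = map (level_proj d) q"
  have Q: "nbwalk (tower G d) Q" "hd Q = last Q"
    using nbwalk_map_covering[OF covering_tower_level_proj[OF G] q_walk] closed \<open>q \<noteq> []\<close>
    by (auto simp: Q_def n_def hd_map last_map)
  have len: "length q = L + 2"
  proof (rule ccontr)
    assume "length q \<noteq> L + 2"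
    then have "2 \<le> length Q \<and> length Q \<le> Suc L" using q by (simp add: Q_def)
    then show False using g Q unfolding girth_gt_def by blast
  qed
  define e where "e = (Q ! 0, Q ! 1)"
  have "e \<in> edges (tower G d)"
    using Q(1) len unfolding e_def nbwalk_iff_nth Q_def by simp
  then have "e \<in> set E" using set_edge_list[OF sym_graph_tower[OF G]] by (simp add: E_def)
  then obtain j where j: "j < length E" "E ! j = e" by (meson in_set_conv_nth)
  define k where "k = d + j"
  define q' where "q' = map (level_proj (Suc k)) q"
  have lift: "tower G (Suc k) = bit_lift (tower G k) (over_edge d e)"
    using tower_in_stage[OF d] j by (simp add: k_def E_def)
  have "nbwalk (tower G (Suc k)) q'"
    using nbwalk_map_covering[OF covering_tower_level_proj[OF G] q_walk] j
    by (simp add: q'_def n_def k_def)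
  then have "nbwalk (bit_lift (tower G k) (over_edge d e)) q'" by (simp only: lift)
  moreover have "q' \<noteq> []" "hd q' = last q'"
    using closed \<open>q \<noteq> []\<close> by (auto simp: q'_def hd_map last_map)
  ultimately have even: "even (card {i. Suc i < length q' \<and> over_edge d e (bit_proj (q' ! i), bit_proj (q' ! Suc i))})"
    by (rule bit_lift_closed_walk_even)
  have "over_edge d e (bit_proj (q' ! i), bit_proj (q' ! Suc i)) \<longleftrightarrow>
      (Q ! i, Q ! Suc i) = e \<or> (Q ! Suc i, Q ! i) = e" if i: "Suc i < length q" for i
  proof -
    have "(q ! i, q ! Suc i) \<in> edges (tower G n)" using q_walk i unfolding nbwalk_iff_nth by blast
    then have "length (snd (q ! i)) = n" "length (snd (q ! Suc i)) = n"
      using covering_edge_verts[OF covering_tower_base[OF G]] tower_level by blast+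
    then show ?thesis
      using i j over_edge_bit_proj_level_proj[of d k "q ! i" "q ! Suc i"]
      by (simp add: q'_def Q_def n_def k_def)
  qed
  then have "{i. Suc i < length q' \<and> over_edge d e (bit_proj (q' ! i), bit_proj (q' ! Suc i))} =
      {i. Suc i < length Q \<and> ((Q ! i, Q ! Suc i) = e \<or> (Q ! Suc i, Q ! i) = e)}"
    by (auto simp: q'_def Q_def)
  also have "\<dots> = {0}"
    unfolding e_def using closed_walk_crosses_first_edge_once[OF g Q(1)] Q(2) len by (simp add: Q_def)
  finally show False using even by simp
qed

lemma girth_gt_tower_eventually:
  assumes G: "finite_loopless_graph G"
  shows "\<exists>N. \<forall>n\<ge>N. girth_gt (tower G n) L"
proof (induction L)
  case 0
  then show ?case using girth_gt_0 by blast
next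
  case (Suc L)
  then obtain N where N: "\<forall>n\<ge>N. girth_gt (tower G n) L" by blast
  obtain d where d: "N \<le> d" "stage_start G d" using stage_start_unbounded by blast
  define N' where "N' = d + length (edge_list (tower G d))"
  have "girth_gt (tower G N') (Suc L)"
    unfolding N'_def using girth_gt_stage_end[OF G d(2)] N d(1) by blast
  then have "\<forall>n\<ge>N'. girth_gt (tower G n) (Suc L)"
    using girth_gt_covering[OF covering_tower_level_proj[OF G]] by blast
  then show ?case by blast
qed

section \<open>Convergence to the tree of non-backtracking walks\<close>

lemma gstar_dist_nonneg: "0 \<le> gstar_dist H r H' r'"
  by (simp add: gstar_dist_def Let_def)

lemma gstar_dist_le_ball_iso:
  assumes "ball_iso H r H' r' h"
  shows "gstar_dist H r H' r' \<le> 1 / (1 + real h)"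
proof -
  define R where "R = Sup {enat h | h. ball_iso H r H' r' h}"
  have "enat h \<le> R" unfolding R_def using assms by (blast intro: Sup_upper)
  then show ?thesis
    unfolding gstar_dist_def Let_def R_def[symmetric]
    by (cases R) (auto simp: frac_le)
qed

lemma LIMSEQ_0_of_inverse_bounds:
  fixes f :: "nat \<Rightarrow> real"
  assumes "\<And>n. 0 \<le> f n" and "\<And>h. \<exists>N. \<forall>n\<ge>N. f n \<le> 1 / (1 + real h)"
  shows "f \<longlonglongrightarrow> 0"
proof (rule LIMSEQ_I)
  fix r :: real assume r: "0 < r"
  obtain h :: nat where "1 / r < real h" using reals_Archimedean2 by blast
  then have "1 / (1 + real h) < r" using r by (simp add: field_simps)
  moreover obtain N where "\<forall>n\<ge>N. f n \<le> 1 / (1 + real h)" using assms(2) by blast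
  ultimately show "\<exists>N. \<forall>n\<ge>N. norm (f n - 0) < r" using assms(1) by (intro exI[of _ N]) force
qed

theorem proposition4p12:
  fixes G :: "'a graph"
  assumes "finite_loopless_graph G"
  shows "\<exists>Gs :: nat \<Rightarrow> ('a \<times> bool list) graph.
           Gs 0 = base_embed G \<and>
           (\<forall>n. is_two_lift_of (Gs (Suc n)) (Gs n)) \<and>
           (\<forall>v \<in> verts G. \<forall>vs :: nat \<Rightarrow> 'a \<times> bool list.
              (\<forall>n. vs n \<in> verts (Gs n) \<and> fst (vs n) = v) \<longrightarrow>
              (\<lambda>n. gstar_dist (Gs n) (vs n) (nb_tree G v) []) \<longlonglongrightarrow> 0)"
proof (intro exI[of _ "tower G"] conjI allI ballI impI tower_0 tower_Suc)
  fix v vs assume vs: "\<forall>n. vs n \<in> verts (tower G n) \<and> fst (vs n) = v"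
  show "(\<lambda>n. gstar_dist (tower G n) (vs n) (nb_tree G v) []) \<longlonglongrightarrow> 0"
  proof (rule LIMSEQ_0_of_inverse_bounds[OF gstar_dist_nonneg])
    fix h
    obtain N where "\<forall>n\<ge>N. girth_gt (tower G n) (2 * h + 2)"
      using girth_gt_tower_eventually[OF assms] by blast
    then have "\<forall>n\<ge>N. ball_iso (tower G n) (vs n) (nb_tree G v) [] h"
      using ball_iso_nb_tree[OF covering_tower_base[OF assms]] vs by blast
    then show "\<exists>N. \<forall>n\<ge>N. gstar_dist (tower G n) (vs n) (nb_tree G v) [] \<le> 1 / (1 + real h)"
      by (intro exI[of _ N] allI impI gstar_dist_le_ball_iso) simp
  qed
qed

end
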